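(* Fix $c, r, \epsilon > 0$ and let $\alpha(\epsilon) = \frac{e^{\epsilon}+1}{e^{\epsilon}-1}$. A binary-output stochastic quantizer is a stochastic mapping $Q : [c-r, c+r] \to \{\gamma_1, \gamma_2\}$, where $\gamma_1, \gamma_2 \in \mathbb{R}$. Consider the following conditions on such a quantizer: (C1) Unbiasedness: $\mathbb{E}(Q(w)) = w$ for all $w \in [c-r, c+r]$; (C2) $\epsilon$-PLDP: $\frac{P(Q(w) = \overline{w})}{P(Q(w') = \overline{w})} \le e^{\epsilon}$ for all $\overline{w} \in \{\gamma_1, \gamma_2\}$ and all $w, w' \in [c-r, c+r]$; (C3) Minimal MSE: $\mathbb{E}((Q(w) - w)^2)$ is minimized for every $w \in [c-r, c+r]$. Define the quantizer $Q(w) = c + U r \alpha(\epsilon)$ for $w \in [c-r, c+r]$, where $U$ is a $\{-1, 1\}$-valued random variable with $P(U = 1) = \frac{1}{2} + \frac{w - c}{2 r \alpha(\epsilon)}$ and $P(U = -1) = \frac{1}{2} - \frac{w - c}{2 r \alpha(\epsilon)}$. Then $Q$ is the unique binary-output stochastic quantizer satisfying conditions (C1)–(C3).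
   Context: In condition (C3) the minimization is over binary-output stochastic quantizers (including the choice of the output values $\gamma_1, \gamma_2$) satisfying the other conditions, and it is required to hold simultaneously at every input $w$. *)

theory Defs
  imports "HOL-Probability.Probability"
begin

text \<open>A stochastic quantizer on the interval [c-r, c+r] is modelled as a map
  from inputs to probability mass functions over the reals (the law of Q(w)).
  Only its values on the interval [c-r, c+r] are relevant.\<close>

definition alpha :: "real \<Rightarrow> real" where
  "alpha \<epsilon> = (exp \<epsilon> + 1) / (exp \<epsilon> - 1)"

definition binary_output ::
  "real \<Rightarrow> real \<Rightarrow> real \<Rightarrow> real \<Rightarrow> (real \<Rightarrow> real pmf) \<Rightarrow> bool" where
  "binary_output c r \<gamma>1 \<gamma>2 Q \<longleftrightarrow>
     (\<forall>w\<in>{c-r..c+r}. set_pmf (Q w) \<subseteq> {\<gamma>1, \<gamma>2})"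

definition unbiased :: "real \<Rightarrow> real \<Rightarrow> (real \<Rightarrow> real pmf) \<Rightarrow> bool" where
  "unbiased c r Q \<longleftrightarrow>
     (\<forall>w\<in>{c-r..c+r}. measure_pmf.expectation (Q w) (\<lambda>x. x) = w)"

text \<open>(C2) epsilon-PLDP, written multiplicatively (ratio bound P/P' \<le> e^eps)\<close>
definition pldp ::
  "real \<Rightarrow> real \<Rightarrow> real \<Rightarrow> real \<Rightarrow> real \<Rightarrow> (real \<Rightarrow> real pmf) \<Rightarrow> bool" where
  "pldp c r \<epsilon> \<gamma>1 \<gamma>2 Q \<longleftrightarrow>
     (\<forall>v\<in>{\<gamma>1, \<gamma>2}. \<forall>w\<in>{c-r..c+r}. \<forall>w'\<in>{c-r..c+r}.
        pmf (Q w) v \<le> exp \<epsilon> * pmf (Q w') v)"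

definition mse :: "(real \<Rightarrow> real pmf) \<Rightarrow> real \<Rightarrow> real" where
  "mse Q w = measure_pmf.expectation (Q w) (\<lambda>x. (x - w)\<^sup>2)"

definition admissible :: "real \<Rightarrow> real \<Rightarrow> real \<Rightarrow> (real \<Rightarrow> real pmf) \<Rightarrow> bool" where
  "admissible c r \<epsilon> Q \<longleftrightarrow>
     (\<exists>\<gamma>1 \<gamma>2. binary_output c r \<gamma>1 \<gamma>2 Q \<and> unbiased c r Q \<and> pldp c r \<epsilon> \<gamma>1 \<gamma>2 Q)"

definition min_mse :: "real \<Rightarrow> real \<Rightarrow> real \<Rightarrow> (real \<Rightarrow> real pmf) \<Rightarrow> bool" where
  "min_mse c r \<epsilon> Q \<longleftrightarrow>
     (\<forall>Q'. admissible c r \<epsilon> Q' \<longrightarrow> (\<forall>w\<in>{c-r..c+r}. mse Q w \<le> mse Q' w))"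

definition satisfies_C123 :: "real \<Rightarrow> real \<Rightarrow> real \<Rightarrow> (real \<Rightarrow> real pmf) \<Rightarrow> bool" where
  "satisfies_C123 c r \<epsilon> Q \<longleftrightarrow> admissible c r \<epsilon> Q \<and> min_mse c r \<epsilon> Q"

definition U_pmf :: "real \<Rightarrow> real \<Rightarrow> real \<Rightarrow> real \<Rightarrow> real pmf" where
  "U_pmf c r \<epsilon> w =
     map_pmf (\<lambda>b. if b then 1 else -1)
       (bernoulli_pmf (1/2 + (w - c) / (2 * r * alpha \<epsilon>)))"

definition Q_opt :: "real \<Rightarrow> real \<Rightarrow> real \<Rightarrow> real \<Rightarrow> real pmf" where
  "Q_opt c r \<epsilon> w = map_pmf (\<lambda>u. c + u * r * alpha \<epsilon>) (U_pmf c r \<epsilon> w)"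

end

theory Submission
  imports Defs
begin

text \<open>Unbiasedness determines the law of a quantizer with outputs \<open>\<gamma>1 < \<gamma>2\<close>: it puts
  mass \<open>(w - \<gamma>1) / (\<gamma>2 - \<gamma>1)\<close> on \<open>\<gamma>2\<close>, and its MSE at \<open>w\<close> is \<open>(w - \<gamma>1) (\<gamma>2 - w)\<close>.
  Both probabilities are monotone in \<open>w\<close>, so the PLDP condition only has to be checked
  at the endpoints \<open>w = c \<plusminus> r\<close>, where it says \<open>\<gamma>1 \<le> c - r \<alpha>(\<epsilon>)\<close> and \<open>c + r \<alpha>(\<epsilon>) \<le> \<gamma>2\<close>.
  The MSE is smallest when both bounds are attained, which is exactly the quantizer \<open>Q\<close>;
  conversely, minimality of the MSE at \<open>w = c\<close> forces both bounds to be attained, and then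
  unbiasedness forces the law of \<open>Q\<close>.\<close>

lemma integral_pmf_two_point:
  fixes M :: "real pmf" and f :: "real \<Rightarrow> real"
  assumes "set_pmf M \<subseteq> {a, b}" and "a \<noteq> b"
  shows "measure_pmf.expectation M f = pmf M a * f a + pmf M b * f b"
proof -
  have "measure_pmf.expectation M f = (\<Sum>x\<in>{a, b}. f x * pmf M x)"
    by (rule integral_measure_pmf_real) (use assms in auto)
  then show ?thesis
    using assms(2) by simp
qed

lemma pmf_two_point_of_mean:
  fixes M :: "real pmf"
  assumes supp: "set_pmf M \<subseteq> {a, b}" and "a < b"
    and mean: "measure_pmf.expectation M (\<lambda>x. x) = w"
  shows "pmf M b = (w - a) / (b - a)" and "pmf M a = (b - w) / (b - a)"
proof -
  have total: "pmf M a + pmf M b = 1"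
    using sum_pmf_eq_1[of "{a, b}" M] supp \<open>a < b\<close> by simp
  have "pmf M a * a + pmf M b * b = w"
    using integral_pmf_two_point[OF supp, of "\<lambda>x. x"] mean \<open>a < b\<close> by simp
  then have "pmf M b * (b - a) = w - a"
    using total by (simp add: algebra_simps flip: eq_diff_eq)
  then show b: "pmf M b = (w - a) / (b - a)"
    using \<open>a < b\<close> by (simp add: eq_divide_eq)
  show "pmf M a = (b - w) / (b - a)"
    using total b \<open>a < b\<close> by (simp add: field_simps)
qed

lemma mean_square_error_two_point:
  fixes M :: "real pmf"
  assumes supp: "set_pmf M \<subseteq> {a, b}" and "a < b"
    and mean: "measure_pmf.expectation M (\<lambda>x. x) = w"
  shows "measure_pmf.expectation M (\<lambda>x. (x - w)\<^sup>2) = (w - a) * (b - w)"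
proof -
  note p = pmf_two_point_of_mean[OF assms]
  have "measure_pmf.expectation M (\<lambda>x. (x - w)\<^sup>2) = pmf M a * (a - w)\<^sup>2 + pmf M b * (b - w)\<^sup>2"
    using integral_pmf_two_point[OF supp] \<open>a < b\<close> by simp
  also have "\<dots> = ((b - w) * (a - w)\<^sup>2 + (w - a) * (b - w)\<^sup>2) / (b - a)"
    unfolding p by (simp add: add_divide_distrib)
  also have "\<dots> = (w - a) * (b - w)"
    using \<open>a < b\<close> by (simp add: field_simps power2_eq_square)
  finally show ?thesis .
qed

lemma pmf_two_point_eqI:
  fixes M N :: "real pmf"
  assumes "set_pmf M \<subseteq> {a, b}" "set_pmf N \<subseteq> {a, b}" "a < b"
    and "measure_pmf.expectation M (\<lambda>x. x) = measure_pmf.expectation N (\<lambda>x. x)"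
  shows "M = N"
proof (rule pmf_eqI)
  fix x
  show "pmf M x = pmf N x"
    using pmf_two_point_of_mean[OF assms(1,3) refl] pmf_two_point_of_mean[OF assms(2,3)]
      assms by (metis insert_iff pmf_eq_0_set_pmf singletonD subsetD)
qed

lemma alpha_gt_1: "\<epsilon> > 0 \<Longrightarrow> alpha \<epsilon> > 1"
  by (simp add: alpha_def)

lemma mult_alpha_le_iff:
  assumes "\<epsilon> > 0"
  shows "r * alpha \<epsilon> \<le> d \<longleftrightarrow> r * (exp \<epsilon> + 1) \<le> d * (exp \<epsilon> - 1)"
  using assms by (simp add: alpha_def field_simps)

lemma endpoint_ratio_bound_lower_iff:
  assumes "r > 0" and "\<epsilon> > 0"
  shows "(\<forall>w\<in>{c-r..c+r}. \<forall>w'\<in>{c-r..c+r}. w - g \<le> exp \<epsilon> * (w' - g)) \<longleftrightarrow>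
    r * alpha \<epsilon> \<le> c - g" (is "?bound \<longleftrightarrow> _")
proof -
  have "?bound \<longleftrightarrow> c + r - g \<le> exp \<epsilon> * (c - r - g)"
  proof
    assume ?bound
    then show "c + r - g \<le> exp \<epsilon> * (c - r - g)"
      using \<open>r > 0\<close> by auto
  next
    assume endpoints: "c + r - g \<le> exp \<epsilon> * (c - r - g)"
    show ?bound
    proof (intro ballI)
      fix w w' assume w: "w \<in> {c-r..c+r}" and w': "w' \<in> {c-r..c+r}"
      have "w - g \<le> c + r - g"
        using w by simp
      also have "\<dots> \<le> exp \<epsilon> * (c - r - g)"
        by (fact endpoints)
      also have "\<dots> \<le> exp \<epsilon> * (w' - g)"
        using w' by (intro mult_left_mono) auto
      finally show "w - g \<le> exp \<epsilon> * (w' - g)" .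
    qed
  qed
  also have "\<dots> \<longleftrightarrow> r * (exp \<epsilon> + 1) \<le> (c - g) * (exp \<epsilon> - 1)"
    by (simp add: algebra_simps)
  also have "\<dots> \<longleftrightarrow> r * alpha \<epsilon> \<le> c - g"
    by (rule mult_alpha_le_iff[OF \<open>\<epsilon> > 0\<close>, symmetric])
  finally show ?thesis .
qed

lemma endpoint_ratio_bound_upper_iff:
  assumes "r > 0" and "\<epsilon> > 0"
  shows "(\<forall>w\<in>{c-r..c+r}. \<forall>w'\<in>{c-r..c+r}. g - w \<le> exp \<epsilon> * (g - w')) \<longleftrightarrow>
    r * alpha \<epsilon> \<le> g - c" (is "?bound \<longleftrightarrow> _")
proof -
  have "?bound \<longleftrightarrow> g - (c - r) \<le> exp \<epsilon> * (g - (c + r))"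
  proof
    assume ?bound
    then show "g - (c - r) \<le> exp \<epsilon> * (g - (c + r))"
      using \<open>r > 0\<close> by auto
  next
    assume endpoints: "g - (c - r) \<le> exp \<epsilon> * (g - (c + r))"
    show ?bound
    proof (intro ballI)
      fix w w' assume w: "w \<in> {c-r..c+r}" and w': "w' \<in> {c-r..c+r}"
      have "g - w \<le> g - (c - r)"
        using w by simp
      also have "\<dots> \<le> exp \<epsilon> * (g - (c + r))"
        by (fact endpoints)
      also have "\<dots> \<le> exp \<epsilon> * (g - w')"
        using w' by (intro mult_left_mono) auto
      finally show "g - w \<le> exp \<epsilon> * (g - w')" .
    qed
  qed
  also have "\<dots> \<longleftrightarrow> r * (exp \<epsilon> + 1) \<le> (g - c) * (exp \<epsilon> - 1)"
    by (simp add: algebra_simps)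
  also have "\<dots> \<longleftrightarrow> r * alpha \<epsilon> \<le> g - c"
    by (rule mult_alpha_le_iff[OF \<open>\<epsilon> > 0\<close>, symmetric])
  finally show ?thesis .
qed

lemma pldp_iff_output_distances:
  assumes "r > 0" and "\<epsilon> > 0" and "g1 < g2"
    and binary: "binary_output c r g1 g2 Q" and unbiased: "unbiased c r Q"
  shows "pldp c r \<epsilon> g1 g2 Q \<longleftrightarrow> r * alpha \<epsilon> \<le> c - g1 \<and> r * alpha \<epsilon> \<le> g2 - c"
proof -
  have pmf: "pmf (Q w) g2 = (w - g1) / (g2 - g1)" "pmf (Q w) g1 = (g2 - w) / (g2 - g1)"
    if "w \<in> {c-r..c+r}" for w
    using pmf_two_point_of_mean[of "Q w" g1 g2 w] that binary unbiased \<open>g1 < g2\<close>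
    unfolding binary_output_def unbiased_def by auto
  have rescale: "x / (g2 - g1) \<le> exp \<epsilon> * y / (g2 - g1) \<longleftrightarrow> x \<le> exp \<epsilon> * y" for x y
    using \<open>g1 < g2\<close> by (simp add: divide_le_cancel)
  have "pldp c r \<epsilon> g1 g2 Q \<longleftrightarrow>
      (\<forall>w\<in>{c-r..c+r}. \<forall>w'\<in>{c-r..c+r}. pmf (Q w) g2 \<le> exp \<epsilon> * pmf (Q w') g2) \<and>
      (\<forall>w\<in>{c-r..c+r}. \<forall>w'\<in>{c-r..c+r}. pmf (Q w) g1 \<le> exp \<epsilon> * pmf (Q w') g1)"
    unfolding pldp_def by auto
  also have "\<dots> \<longleftrightarrow>
      (\<forall>w\<in>{c-r..c+r}. \<forall>w'\<in>{c-r..c+r}. w - g1 \<le> exp \<epsilon> * (w' - g1)) \<and>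
      (\<forall>w\<in>{c-r..c+r}. \<forall>w'\<in>{c-r..c+r}. g2 - w \<le> exp \<epsilon> * (g2 - w'))"
    by (intro conj_cong ball_cong refl) (simp_all add: pmf rescale)
  also have "\<dots> \<longleftrightarrow> r * alpha \<epsilon> \<le> c - g1 \<and> r * alpha \<epsilon> \<le> g2 - c"
    using endpoint_ratio_bound_lower_iff[OF \<open>r > 0\<close> \<open>\<epsilon> > 0\<close>]
      endpoint_ratio_bound_upper_iff[OF \<open>r > 0\<close> \<open>\<epsilon> > 0\<close>] by simp
  finally show ?thesis .
qed

lemma admissible_ordered_outputs:
  assumes "r > 0" and "admissible c r \<epsilon> Q"
  obtains g1 g2 where "g1 < g2" "binary_output c r g1 g2 Q" "unbiased c r Q"
    "pldp c r \<epsilon> g1 g2 Q"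
proof -
  obtain g1 g2 where binary: "binary_output c r g1 g2 Q" and "unbiased c r Q"
    and "pldp c r \<epsilon> g1 g2 Q"
    using assms(2) unfolding admissible_def by blast
  have "g1 \<noteq> g2"
  proof
    assume "g1 = g2"
    then have "Q w = return_pmf g1" if "w \<in> {c-r..c+r}" for w
      using binary that by (simp add: binary_output_def set_pmf_subset_singleton)
    then have "c - r = g1" and "c + r = g1"
      using \<open>unbiased c r Q\<close> \<open>r > 0\<close> unfolding unbiased_def by force+
    with \<open>r > 0\<close> show False by simp
  qed
  moreover have "binary_output c r g2 g1 Q" "pldp c r \<epsilon> g2 g1 Q"
    using binary \<open>pldp c r \<epsilon> g1 g2 Q\<close>
    by (simp_all add: binary_output_def pldp_def insert_commute)
  ultimately show ?thesis
    using that binary \<open>unbiased c r Q\<close> \<open>pldp c r \<epsilon> g1 g2 Q\<close>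
    by (metis linorder_neqE_linordered_idom)
qed

lemma admissibleE:
  assumes "r > 0" and "\<epsilon> > 0" and "admissible c r \<epsilon> Q"
  obtains g1 g2 where "r * alpha \<epsilon> \<le> c - g1" "r * alpha \<epsilon> \<le> g2 - c"
    "binary_output c r g1 g2 Q" "unbiased c r Q"
    "\<And>w. w \<in> {c-r..c+r} \<Longrightarrow> mse Q w = (w - g1) * (g2 - w)"
proof -
  obtain g1 g2 where "g1 < g2" and binary: "binary_output c r g1 g2 Q"
    and unbiased: "unbiased c r Q" and "pldp c r \<epsilon> g1 g2 Q"
    using admissible_ordered_outputs[OF \<open>r > 0\<close> \<open>admissible c r \<epsilon> Q\<close>] .
  moreover have "mse Q w = (w - g1) * (g2 - w)" if "w \<in> {c-r..c+r}" for w
    using mean_square_error_two_point[of "Q w" g1 g2 w] that binary unbiased \<open>g1 < g2\<close>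
    unfolding binary_output_def unbiased_def mse_def by auto
  ultimately show ?thesis
    using that pldp_iff_output_distances[OF \<open>r > 0\<close> \<open>\<epsilon> > 0\<close>] by blast
qed

lemma set_pmf_Q_opt: "set_pmf (Q_opt c r \<epsilon> w) \<subseteq> {c - r * alpha \<epsilon>, c + r * alpha \<epsilon>}"
  by (auto simp: Q_opt_def U_pmf_def)

lemma mean_Q_opt:
  assumes "r > 0" and "\<epsilon> > 0" and w: "w \<in> {c-r..c+r}"
  shows "measure_pmf.expectation (Q_opt c r \<epsilon> w) (\<lambda>x. x) = w"
proof -
  define a where "a = r * alpha \<epsilon>"
  have "r < a"
    using alpha_gt_1[OF \<open>\<epsilon> > 0\<close>] \<open>r > 0\<close> unfolding a_def by simp
  define p where "p = 1/2 + (w - c) / (2 * a)"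
  have "- a \<le> w - c" "w - c \<le> a"
    using w \<open>r < a\<close> by auto
  then have "0 \<le> p" "p \<le> 1"
    using \<open>r < a\<close> \<open>r > 0\<close> unfolding p_def by (simp_all add: field_simps)
  then have "measure_pmf.expectation (Q_opt c r \<epsilon> w) (\<lambda>x. x) = p * (c + a) + (1 - p) * (c - a)"
    by (simp add: Q_opt_def U_pmf_def a_def p_def algebra_simps)
  also have "\<dots> = w"
    using \<open>r < a\<close> \<open>r > 0\<close> unfolding p_def by (simp add: field_simps)
  finally show ?thesis .
qed

lemma admissible_Q_opt:
  assumes "r > 0" and "\<epsilon> > 0"
  shows "admissible c r \<epsilon> (Q_opt c r \<epsilon>)"
proof -
  have binary: "binary_output c r (c - r * alpha \<epsilon>) (c + r * alpha \<epsilon>) (Q_opt c r \<epsilon>)"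
    using set_pmf_Q_opt unfolding binary_output_def by blast
  have unbiased: "unbiased c r (Q_opt c r \<epsilon>)"
    using mean_Q_opt[OF assms] unfolding unbiased_def by blast
  have "c - r * alpha \<epsilon> < c + r * alpha \<epsilon>"
    using alpha_gt_1[OF \<open>\<epsilon> > 0\<close>] \<open>r > 0\<close> by simp
  then have "pldp c r \<epsilon> (c - r * alpha \<epsilon>) (c + r * alpha \<epsilon>) (Q_opt c r \<epsilon>)"
    using pldp_iff_output_distances[OF assms _ binary unbiased] by simp
  with binary unbiased show ?thesis
    unfolding admissible_def by blast
qed

lemma mse_Q_opt:
  assumes "r > 0" and "\<epsilon> > 0" and "w \<in> {c-r..c+r}"
  shows "mse (Q_opt c r \<epsilon>) w = (w - (c - r * alpha \<epsilon>)) * (c + r * alpha \<epsilon> - w)"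
  unfolding mse_def
proof (rule mean_square_error_two_point[OF set_pmf_Q_opt])
  show "c - r * alpha \<epsilon> < c + r * alpha \<epsilon>"
    using alpha_gt_1[OF \<open>\<epsilon> > 0\<close>] \<open>r > 0\<close> by simp
qed (fact mean_Q_opt[OF assms])

lemma min_mse_Q_opt:
  assumes "r > 0" and "\<epsilon> > 0"
  shows "min_mse c r \<epsilon> (Q_opt c r \<epsilon>)"
  unfolding min_mse_def
proof (intro allI impI ballI)
  fix Q w assume "admissible c r \<epsilon> Q" and w: "w \<in> {c-r..c+r}"
  then obtain g1 g2 where "r * alpha \<epsilon> \<le> c - g1" "r * alpha \<epsilon> \<le> g2 - c"
    and mse: "mse Q w = (w - g1) * (g2 - w)"
    using admissibleE[OF assms] by metis
  moreover have "r \<le> r * alpha \<epsilon>"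
    using alpha_gt_1[OF \<open>\<epsilon> > 0\<close>] \<open>r > 0\<close> by simp
  ultimately have "(w - (c - r * alpha \<epsilon>)) * (c + r * alpha \<epsilon> - w) \<le> (w - g1) * (g2 - w)"
    using w by (intro mult_mono) auto
  then show "mse (Q_opt c r \<epsilon>) w \<le> mse Q w"
    using mse_Q_opt[OF assms w] mse by simp
qed

lemma satisfies_C123_Q_opt:
  assumes "r > 0" and "\<epsilon> > 0"
  shows "satisfies_C123 c r \<epsilon> (Q_opt c r \<epsilon>)"
  using admissible_Q_opt[OF assms] min_mse_Q_opt[OF assms] unfolding satisfies_C123_def by blast

lemma satisfies_C123_imp_Q_opt:
  assumes "r > 0" and "\<epsilon> > 0" and C123: "satisfies_C123 c r \<epsilon> Q" and w: "w \<in> {c-r..c+r}"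
  shows "Q w = Q_opt c r \<epsilon> w"
proof -
  define a where "a = r * alpha \<epsilon>"
  have "a > 0"
    using alpha_gt_1[OF \<open>\<epsilon> > 0\<close>] \<open>r > 0\<close> unfolding a_def by simp
  obtain g1 g2 where "a \<le> c - g1" "a \<le> g2 - c" and binary: "binary_output c r g1 g2 Q"
    and unbiased: "unbiased c r Q" and mse: "\<And>w. w \<in> {c-r..c+r} \<Longrightarrow> mse Q w = (w - g1) * (g2 - w)"
    using admissibleE[OF assms(1,2)] C123 unfolding satisfies_C123_def a_def by blast
  have "c \<in> {c-r..c+r}"
    using \<open>r > 0\<close> by simp
  then have "mse Q c \<le> mse (Q_opt c r \<epsilon>) c"
    using C123 admissible_Q_opt[OF assms(1,2)] unfolding satisfies_C123_def min_mse_def by blast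
  then have "(c - g1) * (g2 - c) \<le> a * a"
    using mse_Q_opt[OF assms(1,2) \<open>c \<in> _\<close>] mse[OF \<open>c \<in> _\<close>] unfolding a_def by simp
  then have "c - g1 = a" "g2 - c = a"
    using \<open>a > 0\<close> \<open>a \<le> c - g1\<close> \<open>a \<le> g2 - c\<close>
    by (smt (verit, best) mult_le_less_imp_less mult_less_le_imp_less)+
  then have "set_pmf (Q w) \<subseteq> {c - a, c + a}"
    using binary w unfolding binary_output_def by force
  moreover have "measure_pmf.expectation (Q w) (\<lambda>x. x) = measure_pmf.expectation (Q_opt c r \<epsilon> w) (\<lambda>x. x)"
    using unbiased mean_Q_opt[OF assms(1,2) w] w unfolding unbiased_def by simp
  moreover have "c - a < c + a"
    using \<open>a > 0\<close> by simp
  ultimately show ?thesis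
    using pmf_two_point_eqI set_pmf_Q_opt unfolding a_def by blast
qed

theorem proposition1:
  fixes c r \<epsilon> :: real
  assumes "c > 0" and "r > 0" and "\<epsilon> > 0"
  shows "satisfies_C123 c r \<epsilon> (Q_opt c r \<epsilon>) \<and>
         (\<forall>Q. satisfies_C123 c r \<epsilon> Q \<longrightarrow> (\<forall>w\<in>{c-r..c+r}. Q w = Q_opt c r \<epsilon> w))"
  using satisfies_C123_Q_opt[OF assms(2,3)] satisfies_C123_imp_Q_opt[OF assms(2,3)] by blast

end
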